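(* Let $\alpha\in(0,1)\setminus\mathbb{Q}$ and let $p_s/q_s$ be its continued fraction convergents. Then the following three conditions are equivalent: (a) the sequence $\dfrac{e_n(\alpha)}{n^2\log n}$, $n\geq2$, is bounded; (b) the sequence $\dfrac{e_{q_s}(\alpha)}{q_s^2\log q_s}$ (over $s$ with $q_s\geq2$) is bounded; (c) the sequence $\dfrac{\log q_{s+1}}{q_s^2\log q_s}$ (over $s$ with $q_s\geq2$) is bounded.
   Context: Let $\Delta^2$ be the closed unit bidisk in $\mathbb{C}^2$, $\mathcal{P}_n$ the space of polynomials $P\in\mathbb{C}[z,w]$ of total degree at most $n$, $K=\{(e^z,e^{\alpha z}):\ |z|\leq1\}$, $\|P\|_A=\sup_A|P|$, $E_n(\alpha)=\sup\{\|P\|_{\Delta^2}:\ P\in\mathcal{P}_n,\ \|P\|_K\leq1\}$ and $e_n(\alpha)=\log E_n(\alpha)$. Continued fractions: $\alpha=[a_0;a_1,a_2,\dots]$ with integers $a_j\geq1$ for $j\geq1$; convergents $p_s/q_s=[a_0;a_1,\dots,a_s]$ with $q_s=a_sq_{s-1}+q_{s-2}$, $q_0=1$, $q_{-1}=0$ (and similarly $p_s=a_sp_{s-1}+p_{s-2}$, $p_0=a_0$, $p_{-1}=1$). *)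

theory Defs
  imports Complex_Main
begin

definition polys_deg :: "nat \<Rightarrow> (complex \<times> complex \<Rightarrow> complex) set" where
  "polys_deg n = {P. \<exists>c :: nat \<Rightarrow> nat \<Rightarrow> complex.
      \<forall>z w. P (z, w) = (\<Sum>i\<le>n. \<Sum>j\<le>n - i. c i j * z ^ i * w ^ j)}"

definition bidisk :: "(complex \<times> complex) set" where
  "bidisk = {(z, w). norm z \<le> 1 \<and> norm w \<le> 1}"

definition Kset :: "real \<Rightarrow> (complex \<times> complex) set" where
  "Kset \<alpha> = (\<lambda>z. (exp z, exp (complex_of_real \<alpha> * z))) ` {z. norm z \<le> 1}"

definition supnorm :: "(complex \<times> complex) set \<Rightarrow> (complex \<times> complex \<Rightarrow> complex) \<Rightarrow> real" where
  "supnorm A P = Sup ((\<lambda>x. norm (P x)) ` A)"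

definition E_n :: "real \<Rightarrow> nat \<Rightarrow> real" where
  "E_n \<alpha> n = Sup {supnorm bidisk P | P. P \<in> polys_deg n \<and> supnorm (Kset \<alpha>) P \<le> 1}"

definition e_n :: "real \<Rightarrow> nat \<Rightarrow> real" where
  "e_n \<alpha> n = ln (E_n \<alpha> n)"

fun cf_rem :: "real \<Rightarrow> nat \<Rightarrow> real" where
  "cf_rem x 0 = x"
| "cf_rem x (Suc k) = 1 / (cf_rem x k - of_int \<lfloor>cf_rem x k\<rfloor>)"

definition cf_a :: "real \<Rightarrow> nat \<Rightarrow> int" where
  "cf_a x k = \<lfloor>cf_rem x k\<rfloor>"

text \<open>Denominators of convergents: q_0 = 1, q_1 = a_1 (= a_1 q_0 + q_(-1)),
  q_(s+2) = a_(s+2) q_(s+1) + q_s.\<close>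
fun cf_q :: "real \<Rightarrow> nat \<Rightarrow> int" where
  "cf_q x 0 = 1"
| "cf_q x (Suc 0) = cf_a x 1"
| "cf_q x (Suc (Suc s)) = cf_a x (Suc (Suc s)) * cf_q x (Suc s) + cf_q x s"

end

theory Submission
  imports Defs "HOL-Analysis.Analysis"
begin

(* (a) => (b) is restriction to n = q_s.
   (b) => (c) rests on the LOWER bound  e_{q_s} >= log q_{s+1} - q_s - 1, witnessed by the
     polynomial  kappa (w^{q_s} - z^{p_s}): since q_s alpha is within 1/q_{s+1} of p_s, it is
     uniformly tiny on K, while it has size kappa at (0,1).
   (c) => (a) rests on the UPPER bound
       e_n <= O(n^2 log n) + 2(n+1) log(2 q_s) + 2 log(2 q_{s+1}) (n div q_s + 1)
     for q_s <= 2n < q_{s+1}.  On the real segment, P(e^t, e^{alpha t}) is the exponential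
     sum  sum c_b e^{(i + j alpha) t};  sampling it at t = k/M, the coefficients c_b are
     recovered by Lagrange interpolation at the nodes exp((i + j alpha)/M), and the gaps
     between the nodes are bounded below through a Diophantine dichotomy for |t + m alpha|
     (encoded by the weights gap_weight). *)

section \<open>Continued fractions\<close>

text \<open>Convergents with the index shifted by one, so that the recursion starts uniformly:
  cf_den x (Suc k) is q_k and cf_num x (Suc k) is p_k, while cf_den x 0 = q_(-1) = 0 and
  cf_num x 0 = p_(-1) = 1.\<close>
fun cf_den :: "real \<Rightarrow> nat \<Rightarrow> int" where
  "cf_den x 0 = 0"
| "cf_den x (Suc 0) = 1"
| "cf_den x (Suc (Suc k)) = cf_a x (Suc k) * cf_den x (Suc k) + cf_den x k"

fun cf_num :: "real \<Rightarrow> nat \<Rightarrow> int" where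
  "cf_num x 0 = 1"
| "cf_num x (Suc 0) = cf_a x 0"
| "cf_num x (Suc (Suc k)) = cf_a x (Suc k) * cf_num x (Suc k) + cf_num x k"

definition cf_err :: "real \<Rightarrow> nat \<Rightarrow> real" where
  "cf_err x k = of_int (cf_den x k) * x - of_int (cf_num x k)"

lemma cf_q_eq_den: "cf_q x s = cf_den x (Suc s)"
  by (induction x s rule: cf_q.induct) auto

text \<open>Complete quotients of an irrational number stay irrational, so no floor is attained.\<close>
lemma cf_rem_irrational:
  assumes "x \<notin> \<rat>" shows "cf_rem x k \<notin> \<rat>"
proof (induction k)
  case 0 then show ?case using assms by simp
next
  case (Suc k)
  let ?r = "cf_rem x k"
  have frac: "?r - of_int \<lfloor>?r\<rfloor> \<notin> \<rat>"
  proof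
    assume "?r - of_int \<lfloor>?r\<rfloor> \<in> \<rat>"
    then have "?r - of_int \<lfloor>?r\<rfloor> + of_int \<lfloor>?r\<rfloor> \<in> \<rat>" by (intro Rats_add) auto
    then show False using Suc by simp
  qed
  show ?case
  proof
    assume "cf_rem x (Suc k) \<in> \<rat>"
    then have "1 / cf_rem x (Suc k) \<in> \<rat>" using Rats_divide[OF Rats_1] by blast
    then show False using frac by simp
  qed
qed

lemma cf_a_bounds:
  assumes "x \<notin> \<rat>"
  shows "of_int (cf_a x k) < cf_rem x k" "cf_rem x k < of_int (cf_a x k) + 1"
proof -
  have "cf_rem x k \<noteq> of_int (cf_a x k)" using cf_rem_irrational[OF assms, of k] by auto
  then show "of_int (cf_a x k) < cf_rem x k" unfolding cf_a_def
    by (metis of_int_floor_le order_le_imp_less_or_eq)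
  show "cf_rem x k < of_int (cf_a x k) + 1" unfolding cf_a_def by linarith
qed

lemma cf_rem_Suc_mult:
  assumes "x \<notin> \<rat>"
  shows "cf_rem x (Suc k) * (cf_rem x k - of_int (cf_a x k)) = 1"
  using cf_a_bounds[OF assms, of k] by (simp add: cf_a_def)

lemma cf_rem_Suc_gt_1: assumes "x \<notin> \<rat>" shows "cf_rem x (Suc k) > 1"
proof -
  have "0 < cf_rem x k - of_int (cf_a x k)" "cf_rem x k - of_int (cf_a x k) < 1"
    using cf_a_bounds[OF assms, of k] by auto
  then show ?thesis by (simp add: cf_a_def)
qed

lemma cf_a_Suc_ge_1: assumes "x \<notin> \<rat>" shows "cf_a x (Suc k) \<ge> 1"
  using cf_rem_Suc_gt_1[OF assms, of k] unfolding cf_a_def by linarith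

lemma cf_a_0_unit_interval: assumes "0 < x" "x < 1" shows "cf_a x 0 = 0"
  using assms by (simp add: cf_a_def floor_eq_iff)

lemma cf_den_bounds:
  assumes "x \<notin> \<rat>"
  shows "cf_den x (Suc k) \<ge> 1 \<and> cf_den x k \<ge> 0 \<and> cf_den x (Suc k) \<ge> int k"
proof (induction k rule: nat_less_induct)
  case (1 k)
  show ?case
  proof (cases k)
    case 0 then show ?thesis by simp
  next
    case (Suc j)
    show ?thesis
    proof (cases j)
      case 0 then show ?thesis using Suc cf_a_Suc_ge_1[OF assms, of 0] by simp
    next
      case (Suc i)
      have a: "cf_a x (Suc j) \<ge> 1" using cf_a_Suc_ge_1[OF assms] by blast
      have IH: "cf_den x (Suc j) \<ge> 1" "cf_den x (Suc j) \<ge> int j" "cf_den x j \<ge> 1"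
        using 1 \<open>k = Suc j\<close> Suc by auto
      have "cf_a x (Suc j) * cf_den x (Suc j) \<ge> cf_den x (Suc j)"
        using a IH by (simp add: mult_le_cancel_right1)
      moreover have "cf_den x (Suc k) = cf_a x (Suc j) * cf_den x (Suc j) + cf_den x j"
        using \<open>k = Suc j\<close> by simp
      ultimately show ?thesis using IH unfolding \<open>k = Suc j\<close> by linarith
    qed
  qed
qed

lemma cf_den_pos: "x \<notin> \<rat> \<Longrightarrow> cf_den x (Suc k) \<ge> 1"
  and cf_den_nonneg: "x \<notin> \<rat> \<Longrightarrow> cf_den x k \<ge> 0"
  and cf_den_ge_index: "x \<notin> \<rat> \<Longrightarrow> cf_den x (Suc k) \<ge> int k"
  using cf_den_bounds by blast+

lemma cf_den_mono: assumes "x \<notin> \<rat>" shows "cf_den x (Suc k) \<le> cf_den x (Suc (Suc k))"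
proof -
  have "cf_a x (Suc k) * cf_den x (Suc k) \<ge> cf_den x (Suc k)"
    using cf_a_Suc_ge_1[OF assms, of k] cf_den_pos[OF assms, of k] by (simp add: mult_le_cancel_right1)
  then show ?thesis using cf_den_nonneg[OF assms, of k] by simp
qed

lemma cf_num_pos:
  assumes "x \<notin> \<rat>" "0 < x" "x < 1"
  shows "cf_num x (Suc (Suc k)) \<ge> 1 \<and> cf_num x (Suc k) \<ge> 0"
proof (induction k)
  case 0 then show ?case using cf_a_0_unit_interval[OF assms(2,3)] by simp
next
  case (Suc k)
  have "1 * 1 \<le> cf_a x (Suc (Suc k)) * cf_num x (Suc (Suc k))"
    using cf_a_Suc_ge_1[OF assms(1), of "Suc k"] Suc by (intro mult_mono) (auto simp del: cf_num.simps)
  then show ?case using Suc by simp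
qed

lemma cf_err_rec: "cf_err x (Suc (Suc k)) = of_int (cf_a x (Suc k)) * cf_err x (Suc k) + cf_err x k"
  by (simp add: cf_err_def algebra_simps)

lemma cf_err_rem:
  assumes "x \<notin> \<rat>" "0 < x" "x < 1"
  shows "cf_err x (Suc k) * cf_rem x (Suc k) = - cf_err x k"
proof (induction k)
  case 0
  then show ?case using assms cf_a_0_unit_interval[OF assms(2,3)] by (simp add: cf_err_def cf_a_def)
next
  case (Suc k)
  have r: "cf_rem x (Suc (Suc k)) * (cf_rem x (Suc k) - of_int (cf_a x (Suc k))) = 1"
    using cf_rem_Suc_mult[OF assms(1)] by blast
  have "cf_err x (Suc (Suc k)) * cf_rem x (Suc (Suc k)) =
     (of_int (cf_a x (Suc k)) * cf_err x (Suc k) - cf_err x (Suc k) * cf_rem x (Suc k)) * cf_rem x (Suc (Suc k))"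
    using Suc by (simp add: cf_err_rec)
  also have "\<dots> = - cf_err x (Suc k) * (cf_rem x (Suc (Suc k)) * (cf_rem x (Suc k) - of_int (cf_a x (Suc k))))"
    by (simp add: algebra_simps)
  finally show ?case using r by simp
qed

lemma cf_err_formula:
  assumes "x \<notin> \<rat>" "0 < x" "x < 1"
  shows "\<bar>cf_err x (Suc k)\<bar> * (of_int (cf_den x (Suc k)) * cf_rem x (Suc k) + of_int (cf_den x k)) = 1"
proof (induction k)
  case 0
  then show ?case using assms cf_a_0_unit_interval[OF assms(2,3)] by (simp add: cf_err_def cf_a_def)
next
  case (Suc k)
  define A where "A = \<bar>cf_err x (Suc (Suc k))\<bar>"
  define E where "E = \<bar>cf_err x (Suc k)\<bar>"
  define R2 where "R2 = cf_rem x (Suc (Suc k))"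
  define R1 where "R1 = cf_rem x (Suc k)"
  define a where "a = (of_int (cf_a x (Suc k)) :: real)"
  define q2 where "q2 = (of_int (cf_den x (Suc (Suc k))) :: real)"
  define q1 where "q1 = (of_int (cf_den x (Suc k)) :: real)"
  define q0 where "q0 = (of_int (cf_den x k) :: real)"
  have qd: "q2 = a * q1 + q0" unfolding q2_def a_def q1_def q0_def by simp
  have r: "R2 * (R1 - a) = 1"
    using cf_rem_Suc_mult[OF assms(1)] unfolding R2_def R1_def a_def by blast
  have "R2 > 0" using cf_rem_Suc_gt_1[OF assms(1), of "Suc k"] unfolding R2_def by linarith
  then have AE: "A * R2 = E"
    using cf_err_rem[OF assms, of "Suc k"] unfolding A_def R2_def E_def
    by (metis abs_minus_cancel abs_mult abs_of_pos)
  have "A * q1 = A * q1 * (R2 * (R1 - a))" using r by simp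
  also have "\<dots> = (A * R2) * q1 * (R1 - a)" by (simp add: algebra_simps)
  finally have Aq1: "A * q1 = E * q1 * (R1 - a)" using AE by simp
  have "A * (q2 * R2 + q1) = (A * R2) * q2 + A * q1" by (simp add: algebra_simps)
  also have "\<dots> = E * q2 + E * q1 * (R1 - a)" using AE Aq1 by simp
  also have "\<dots> = E * (q1 * R1 + q0)" using qd by (simp add: algebra_simps)
  finally show ?case using Suc unfolding A_def E_def R2_def R1_def q2_def q1_def q0_def by simp
qed

lemma cf_det: "cf_den x (Suc k) * cf_num x k - cf_num x (Suc k) * cf_den x k = (-1) ^ k"
proof (induction k)
  case (Suc k)
  have "cf_den x (Suc (Suc k)) * cf_num x (Suc k) - cf_num x (Suc (Suc k)) * cf_den x (Suc k)
      = - (cf_den x (Suc k) * cf_num x k - cf_num x (Suc k) * cf_den x k)" by (simp add: algebra_simps)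
  then show ?case using Suc by simp
qed simp

lemma cf_coprime: "coprime (cf_num x (Suc k)) (cf_den x (Suc k))"
proof (rule coprimeI)
  fix c assume "c dvd cf_num x (Suc k)" "c dvd cf_den x (Suc k)"
  then have "c dvd (-1) ^ k" using cf_det[of x k] by (metis dvd_diff dvd_mult2)
  moreover have "is_unit ((-1::int) ^ k)" by simp
  ultimately show "is_unit c" using dvd_unit_imp_unit by blast
qed

lemma cf_err_bounds:
  assumes "x \<notin> \<rat>" "0 < x" "x < 1"
  shows "1 / (2 * of_int (cf_den x (Suc (Suc k)))) < \<bar>cf_err x (Suc k)\<bar>"
        "\<bar>cf_err x (Suc k)\<bar> < 1 / of_int (cf_den x (Suc (Suc k)))"
proof -
  define D where "D = of_int (cf_den x (Suc k)) * cf_rem x (Suc k) + of_int (cf_den x k)"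
  define q where "q = (of_int (cf_den x (Suc k)) :: real)"
  define Q where "Q = (of_int (cf_den x (Suc (Suc k))) :: real)"
  have q1: "q \<ge> 1" "of_int (cf_den x k) \<ge> (0::real)"
    using cf_den_pos[OF assms(1), of k] cf_den_nonneg[OF assms(1), of k] unfolding q_def by auto
  have ra: "of_int (cf_a x (Suc k)) < cf_rem x (Suc k)" "cf_rem x (Suc k) < of_int (cf_a x (Suc k)) + 1"
    using cf_a_bounds[OF assms(1), of "Suc k"] by (simp_all del: cf_rem.simps)
  have Qd: "Q = of_int (cf_a x (Suc k)) * q + of_int (cf_den x k)" unfolding Q_def q_def by simp
  have qQ: "q \<le> Q" using cf_den_mono[OF assms(1), of k] unfolding q_def Q_def by linarith
  have "q * of_int (cf_a x (Suc k)) < q * cf_rem x (Suc k)"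
    using q1 ra by (intro mult_strict_left_mono) auto
  then have D1: "Q < D" using Qd unfolding D_def q_def by (simp add: mult.commute)
  have "q * cf_rem x (Suc k) < q * (of_int (cf_a x (Suc k)) + 1)"
    using q1 ra by (intro mult_strict_left_mono) auto
  then have D2: "D < 2 * Q" using Qd qQ unfolding D_def q_def by (simp add: algebra_simps)
  have e: "\<bar>cf_err x (Suc k)\<bar> = 1 / D"
    using cf_err_formula[OF assms, of k] D1 q1 qQ unfolding D_def by (simp add: field_simps)
  show "1 / (2 * of_int (cf_den x (Suc (Suc k)))) < \<bar>cf_err x (Suc k)\<bar>"
    unfolding e using D1 D2 q1 qQ unfolding Q_def[symmetric] by (intro divide_strict_left_mono) auto
  show "\<bar>cf_err x (Suc k)\<bar> < 1 / of_int (cf_den x (Suc (Suc k)))"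
    unfolding e using D1 q1 qQ unfolding Q_def[symmetric] by (intro divide_strict_left_mono) auto
qed

section \<open>A Diophantine dichotomy and two counting lemmas\<close>

lemma card_near_le_2: "card {i::nat. i \<le> n \<and> \<bar>u - real i\<bar> < 1} \<le> 2"
proof -
  have "{i::nat. i \<le> n \<and> \<bar>u - real i\<bar> < 1} \<subseteq> {nat \<lfloor>u\<rfloor>, nat (\<lfloor>u\<rfloor> + 1)}"
  proof
    fix i assume "i \<in> {i::nat. i \<le> n \<and> \<bar>u - real i\<bar> < 1}"
    then have "u - 1 < real i" "real i < u + 1" by auto
    then have "int i = \<lfloor>u\<rfloor> \<or> int i = \<lfloor>u\<rfloor> + 1" by linarith
    then show "i \<in> {nat \<lfloor>u\<rfloor>, nat (\<lfloor>u\<rfloor> + 1)}" by auto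
  qed
  moreover have "card {nat \<lfloor>u\<rfloor>, nat (\<lfloor>u\<rfloor> + 1)} \<le> 2" by (simp add: card_insert_if)
  ultimately show ?thesis by (meson card_mono finite.emptyI finite.insertI order_trans)
qed

lemma card_congruent_le:
  assumes "q \<ge> (1::int)"
  shows "card {j::nat. j \<le> n \<and> q dvd (int j0 - int j)} \<le> n div (nat q) + 1"
proof -
  define qn where "qn = nat q"
  have qi: "q = int qn" using assms unfolding qn_def by auto
  let ?A = "{j::nat. j \<le> n \<and> q dvd (int j0 - int j)}"
  have same_mod: "j mod qn = j0 mod qn" if "j \<in> ?A" for j
  proof -
    have "int j0 mod int qn = int j mod int qn" using that qi by (auto simp: mod_eq_dvd_iff)
    then show ?thesis by (metis of_nat_eq_iff of_nat_mod)
  qed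
  have "inj_on (\<lambda>j. j div qn) ?A"
    by (rule inj_onI) (metis same_mod div_mult_mod_eq)
  moreover have "(\<lambda>j. j div qn) ` ?A \<subseteq> {..n div qn}" by (auto intro: div_le_mono)
  ultimately have "card ?A \<le> card {..n div qn}" by (meson card_inj_on_le finite_atMost)
  then show ?thesis unfolding qn_def by simp
qed

locale irrational_unit =
  fixes \<alpha> :: real
  assumes irrational: "\<alpha> \<notin> \<rat>" and pos: "0 < \<alpha>" and less_1: "\<alpha> < 1"
begin

lemma den_pos: "cf_den \<alpha> (Suc k) \<ge> 1"
  using cf_den_pos[OF irrational] .

lemma den_pos_real: "real_of_int (cf_den \<alpha> (Suc k)) \<ge> 1"
  using den_pos[of k] by simp

lemma den_exceeds: "\<exists>s. 2 * int n < cf_den \<alpha> (Suc (Suc s))"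
  using cf_den_ge_index[OF irrational, of "Suc (2 * n)"] by (intro exI[of _ "2 * n"]) simp

text \<open>If m \<noteq> 0 is small compared to q_(s+1), then t + m\<alpha> is either at least 1/(2 q_s)
  in absolute value, or m is a multiple of q_s and |t + m\<alpha>| is at least |\<delta>_s|.
  (Multiply by q_s: q_s (t + m\<alpha>) = (q_s t + m p_s) + m \<delta>_s.)\<close>
lemma diophantine_dichotomy:
  fixes m t :: int
  assumes m0: "m \<noteq> 0" and small: "\<bar>of_int m\<bar> * \<bar>cf_err \<alpha> (Suc s)\<bar> < 1/2"
  shows "1 / (2 * of_int (cf_den \<alpha> (Suc s))) \<le> \<bar>of_int t + of_int m * \<alpha>\<bar>
      \<or> (cf_den \<alpha> (Suc s) dvd m \<and> \<bar>cf_err \<alpha> (Suc s)\<bar> \<le> \<bar>of_int t + of_int m * \<alpha>\<bar>)"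
proof -
  define q where "q = cf_den \<alpha> (Suc s)"
  define p where "p = cf_num \<alpha> (Suc s)"
  define \<epsilon> where "\<epsilon> = cf_err \<alpha> (Suc s)"
  define N where "N = q * t + m * p"
  have qpos: "q \<ge> 1" using den_pos unfolding q_def by simp
  have key: "of_int q * (of_int t + of_int m * \<alpha>) = of_int N + of_int m * \<epsilon>"
    unfolding N_def \<epsilon>_def cf_err_def q_def p_def by (simp add: algebra_simps)
  show ?thesis
  proof (cases "N = 0")
    case False
    then have "\<bar>of_int N\<bar> \<ge> (1::real)"
      by (metis of_int_1_le_iff of_int_abs zero_less_abs_iff int_one_le_iff_zero_less)
    moreover have "\<bar>of_int m * \<epsilon>\<bar> < 1/2" using small unfolding \<epsilon>_def by (simp add: abs_mult)
    ultimately have "\<bar>of_int q * (of_int t + of_int m * \<alpha>)\<bar> \<ge> 1/2"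
      unfolding key by linarith
    then have "of_int q * \<bar>of_int t + of_int m * \<alpha>\<bar> \<ge> 1/2"
      using qpos by (simp add: abs_mult)
    then have "1 / (2 * of_int q) \<le> \<bar>of_int t + of_int m * \<alpha>\<bar>"
      using qpos by (simp add: field_simps)
    then show ?thesis unfolding q_def by simp
  next
    case True
    then have "q dvd m * p" unfolding N_def by (metis add.commute add_eq_0_iff dvd_minus_iff dvd_triv_left)
    then have dv: "q dvd m" using cf_coprime[of \<alpha> s] unfolding q_def p_def
      by (metis coprime_commute coprime_dvd_mult_left_iff)
    then have "\<bar>q\<bar> \<le> \<bar>m\<bar>" using m0 by (simp add: dvd_imp_le_int)
    then have "of_int q * \<bar>\<epsilon>\<bar> \<le> \<bar>of_int m\<bar> * \<bar>\<epsilon>\<bar>" using qpos by (intro mult_right_mono) auto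
    also have "\<dots> = \<bar>of_int q * (of_int t + of_int m * \<alpha>)\<bar>"
      using key True by (simp add: abs_mult)
    also have "\<dots> = of_int q * \<bar>of_int t + of_int m * \<alpha>\<bar>"
      using qpos by (simp add: abs_mult)
    finally have "\<bar>\<epsilon>\<bar> \<le> \<bar>of_int t + of_int m * \<alpha>\<bar>" using qpos by simp
    then show ?thesis using dv unfolding q_def \<epsilon>_def by simp
  qed
qed

end

section \<open>Separation of the frequencies i + j\<alpha>\<close>

text \<open>On K the monomial z^i w^j becomes exp((i + j\<alpha>) u); we call i + j\<alpha> its frequency.
  The exponents (i, j) of a polynomial of degree at most n range over the grid {..n} \<times> {..n}.\<close>
definition freq :: "real \<Rightarrow> nat \<times> nat \<Rightarrow> real" where
  "freq x b = real (fst b) + x * real (snd b)"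

abbreviation grid :: "nat \<Rightarrow> (nat \<times> nat) set" where
  "grid n \<equiv> {..n} \<times> {..n}"

text \<open>A weight controlling -log |freq a - freq b| (see gap_weight_bound): zero for
  distinct frequencies in the same column or at distance at least 1, otherwise log(2 q_s),
  plus log(2 q_(s+1)) when q_s divides the column difference.\<close>
definition gap_weight :: "real \<Rightarrow> nat \<Rightarrow> nat \<times> nat \<Rightarrow> nat \<times> nat \<Rightarrow> real" where
  "gap_weight x s a b =
     (if snd b = snd a then 0
      else if \<bar>freq x a - freq x b\<bar> < 1 then
        ln (2 * of_int (cf_den x (Suc s)))
        + (if cf_den x (Suc s) dvd (int (snd a) - int (snd b))
           then ln (2 * of_int (cf_den x (Suc (Suc s)))) else 0)
      else 0)"

text \<open>The total weight allowed for one row of the interpolation matrix.\<close>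
definition gap_budget :: "real \<Rightarrow> nat \<Rightarrow> nat \<Rightarrow> real" where
  "gap_budget x n s =
     2 * (real n + 1) * ln (2 * of_int (cf_den x (Suc s)))
     + 2 * ln (2 * of_int (cf_den x (Suc (Suc s)))) * (real (n div nat (cf_den x (Suc s))) + 1)"

context irrational_unit
begin

lemma freq_nonneg: "freq \<alpha> b \<ge> 0"
  unfolding freq_def using pos by simp

lemma ln_twice_den_pos: "ln (2 * of_int (cf_den \<alpha> (Suc s))) > (0::real)"
  using den_pos_real[of s] by simp

lemma gap_weight_nonneg: "gap_weight \<alpha> s a b \<ge> 0"
  unfolding gap_weight_def using ln_twice_den_pos[of s] ln_twice_den_pos[of "Suc s"] by auto

lemma small_multiplier:
  assumes "2 * int n < cf_den \<alpha> (Suc (Suc s))" and "\<bar>of_int m\<bar> \<le> real n"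
  shows "\<bar>of_int m\<bar> * \<bar>cf_err \<alpha> (Suc s)\<bar> < 1/2"
proof -
  define Q where "Q = real_of_int (cf_den \<alpha> (Suc (Suc s)))"
  have nQ: "2 * real n < Q" using assms(1) unfolding Q_def by linarith
  have "\<bar>of_int m\<bar> * \<bar>cf_err \<alpha> (Suc s)\<bar> \<le> real n * \<bar>cf_err \<alpha> (Suc s)\<bar>"
    using assms(2) by (simp add: mult_right_mono)
  also have "\<dots> \<le> real n * (1 / Q)"
    using cf_err_bounds(2)[OF irrational pos less_1, of s] unfolding Q_def
    by (intro mult_left_mono) auto
  also have "\<dots> < 1/2" using nQ by (simp add: field_simps)
  finally show ?thesis .
qed

lemma gap_weight_bound:
  assumes n: "2 * int n < cf_den \<alpha> (Suc (Suc s))"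
    and a: "a \<in> grid n" and b: "b \<in> grid n" and ab: "a \<noteq> b"
  shows "exp (- gap_weight \<alpha> s a b) \<le> \<bar>freq \<alpha> a - freq \<alpha> b\<bar>"
proof -
  obtain ia ja ib jb where ai: "a = (ia, ja)" and bi: "b = (ib, jb)" by (cases a, cases b)
  define t where "t = int ia - int ib"
  define m where "m = int ja - int jb"
  define q where "q = cf_den \<alpha> (Suc s)"
  define Q where "Q = cf_den \<alpha> (Suc (Suc s))"
  have d: "freq \<alpha> a - freq \<alpha> b = of_int t + of_int m * \<alpha>"
    unfolding freq_def ai bi t_def m_def by (simp add: algebra_simps)
  consider (same_column) "jb = ja" | (far) "jb \<noteq> ja" "\<not> \<bar>freq \<alpha> a - freq \<alpha> b\<bar> < 1"
    | (near) "jb \<noteq> ja" "\<bar>freq \<alpha> a - freq \<alpha> b\<bar> < 1" by blast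
  then show ?thesis
  proof cases
    case same_column
    then have "ia \<noteq> ib" using ab ai bi by auto
    then have "\<bar>of_int t\<bar> \<ge> (1::real)" unfolding t_def by linarith
    then show ?thesis using d same_column unfolding gap_weight_def ai bi m_def by simp
  next
    case far
    then show ?thesis unfolding gap_weight_def using ai bi by auto
  next
    case near
    have weight: "gap_weight \<alpha> s a b = ln (2 * of_int q) + (if q dvd m then ln (2 * of_int Q) else 0)"
      unfolding gap_weight_def using near ai bi unfolding q_def Q_def m_def by auto
    have q1: "of_int q \<ge> (1::real)" "of_int Q \<ge> (1::real)"
      using den_pos_real[of s] den_pos_real[of "Suc s"] unfolding q_def Q_def by auto
    have "m \<noteq> 0" using near(1) unfolding m_def by simp
    moreover have "\<bar>of_int m\<bar> * \<bar>cf_err \<alpha> (Suc s)\<bar> < 1/2"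
      using a b by (intro small_multiplier[OF n]) (auto simp: ai bi m_def)
    ultimately consider
        (coarse) "1 / (2 * of_int q) \<le> \<bar>of_int t + of_int m * \<alpha>\<bar>"
      | (multiple) "q dvd m" "\<bar>cf_err \<alpha> (Suc s)\<bar> \<le> \<bar>of_int t + of_int m * \<alpha>\<bar>"
      using diophantine_dichotomy unfolding q_def by blast
    then show ?thesis
    proof cases
      case coarse
      have "exp (- gap_weight \<alpha> s a b) \<le> exp (- ln (2 * of_int q))"
        using weight q1 by auto
      also have "\<dots> = 1 / (2 * of_int q)" using q1 by (simp add: exp_minus inverse_eq_divide)
      finally show ?thesis using coarse d by simp
    next
      case multiple
      have "exp (- gap_weight \<alpha> s a b) \<le> exp (- ln (2 * of_int Q))"
        using weight multiple q1 by auto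
      also have "\<dots> = 1 / (2 * of_int Q)" using q1 by (simp add: exp_minus inverse_eq_divide)
      also have "\<dots> \<le> \<bar>cf_err \<alpha> (Suc s)\<bar>"
        using cf_err_bounds(1)[OF irrational pos less_1, of s] unfolding Q_def by simp
      finally show ?thesis using multiple d by simp
    qed
  qed
qed

text \<open>Summing the weights over a row: in each column at most two frequencies are near
  freq a, and at most n div q_s + 1 columns are congruent to that of a modulo q_s.\<close>
lemma gap_weight_sum:
  assumes "a \<in> grid n"
  shows "(\<Sum>b\<in>grid n. gap_weight \<alpha> s a b) \<le> gap_budget \<alpha> n s"
proof -
  obtain ia ja where ai: "a = (ia, ja)" by (cases a)
  define R :: real where "R = ln (2 * of_int (cf_den \<alpha> (Suc s)))"
  define T :: real where "T = ln (2 * of_int (cf_den \<alpha> (Suc (Suc s))))"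
  define q where "q = cf_den \<alpha> (Suc s)"
  have RT: "R \<ge> 0" "T \<ge> 0"
    using ln_twice_den_pos[of s] ln_twice_den_pos[of "Suc s"] unfolding R_def T_def by auto
  define g where "g j = (if j = ja then 0 else R + (if q dvd (int ja - int j) then T else 0))" for j
  have column: "(\<Sum>i\<le>n. gap_weight \<alpha> s a (i, j)) \<le> 2 * g j" for j
  proof -
    define A where "A = {i::nat. i \<le> n \<and> \<bar>(real ia + \<alpha> * real ja - \<alpha> * real j) - real i\<bar> < 1}"
    have "(\<Sum>i\<le>n. gap_weight \<alpha> s a (i, j)) = (\<Sum>i\<le>n. if i \<in> A then g j else 0)"
      unfolding gap_weight_def g_def A_def ai freq_def q_def R_def T_def
      by (intro sum.cong) (auto simp: algebra_simps)
    also have "\<dots> = real (card A) * g j"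
      using sum.inter_restrict[of "{..n}" "\<lambda>_. g j" A] by (simp add: A_def Int_def)
    also have "\<dots> \<le> 2 * g j"
      using card_near_le_2 RT unfolding A_def g_def by (intro mult_right_mono) auto
    finally show ?thesis .
  qed
  define C where "C = {j. j \<le> n \<and> q dvd (int ja - int j)}"
  have "(\<Sum>b\<in>grid n. gap_weight \<alpha> s a b) = (\<Sum>i\<le>n. \<Sum>j\<le>n. gap_weight \<alpha> s a (i, j))"
    by (simp add: sum.cartesian_product)
  also have "\<dots> = (\<Sum>j\<le>n. \<Sum>i\<le>n. gap_weight \<alpha> s a (i, j))" by (rule sum.swap)
  also have "\<dots> \<le> (\<Sum>j\<le>n. 2 * R + 2 * (if j \<in> C then T else 0))"
    using column RT by (intro sum_mono order_trans[OF column]) (auto simp: g_def C_def)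
  also have "\<dots> = 2 * (real n + 1) * R + 2 * T * real (card C)"
    using sum.inter_restrict[of "{..n}" "\<lambda>_. T" C]
    by (simp add: sum.distrib sum_distrib_left[symmetric] C_def Int_def conj_commute algebra_simps)
  also have "\<dots> \<le> 2 * (real n + 1) * R + 2 * T * (real (n div nat q) + 1)"
    using card_congruent_le[of q n ja] den_pos[of s] RT unfolding C_def q_def
    by (intro add_left_mono mult_left_mono) auto
  finally show ?thesis unfolding gap_budget_def R_def T_def q_def .
qed

end

section \<open>Recovering coefficients of exponential sums by interpolation\<close>

lemma coeff_prod_linear_bound:
  fixes x :: "'b \<Rightarrow> complex"
  assumes "finite A"
  shows "norm (coeff (\<Prod>b\<in>A. [:- x b, 1:]) k) \<le> (\<Prod>b\<in>A. 1 + norm (x b))"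
  using assms
proof (induction A arbitrary: k rule: finite_induct)
  case empty
  then show ?case by (cases k) auto
next
  case (insert a A)
  let ?Q = "\<Prod>b\<in>A. [:- x b, 1:]"
  let ?B = "\<Prod>b\<in>A. 1 + norm (x b)"
  have "[:- x a, 1:] * ?Q = smult (- x a) ?Q + pCons 0 ?Q"
    by (simp add: mult_pCons_left)
  then have c: "coeff ([:- x a, 1:] * ?Q) k = - x a * coeff ?Q k + (case k of 0 \<Rightarrow> 0 | Suc j \<Rightarrow> coeff ?Q j)"
    by (simp add: coeff_pCons)
  have shifted: "norm (case k of 0 \<Rightarrow> 0 | Suc j \<Rightarrow> coeff ?Q j) \<le> ?B"
    using insert.IH by (cases k) (auto intro: prod_nonneg)
  have "norm (coeff ([:- x a, 1:] * ?Q) k) \<le> norm (x a) * norm (coeff ?Q k) + norm (case k of 0 \<Rightarrow> 0 | Suc j \<Rightarrow> coeff ?Q j)"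
    unfolding c by (rule order_trans[OF norm_triangle_ineq]) (simp add: norm_mult)
  also have "\<dots> \<le> norm (x a) * ?B + ?B"
    using insert.IH shifted by (intro add_mono mult_left_mono) auto
  also have "\<dots> = (1 + norm (x a)) * ?B" by (simp add: algebra_simps)
  finally show ?case using insert by simp
qed

text \<open>Applying the coefficients of L = \<Prod>_(b \<noteq> a) (z - X_b) to the power sums
  \<Sigma>_b c_b X_b^k isolates c_a, because L vanishes at every other node.\<close>
lemma lagrange_isolates_coeff:
  fixes X :: "'b \<Rightarrow> real" and c :: "'b \<Rightarrow> complex" and I :: "'b set" and a :: 'b
  defines "L \<equiv> (\<Prod>b\<in>I-{a}. [:- complex_of_real (X b), 1:])"
  assumes fin: "finite I" and a: "a \<in> I" and M: "card I \<le> M"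
  shows "(\<Sum>k<M. coeff L k * (\<Sum>b\<in>I. c b * of_real (X b) ^ k)) = c a * poly L (of_real (X a))"
proof -
  have "degree L = card (I - {a})" unfolding L_def
    by (subst degree_prod_eq_sum_degree) auto
  moreover have "card I > 0" using fin a by (auto simp: card_gt_0_iff)
  ultimately have degM: "degree L < M" using M fin a by (simp add: card_Diff_singleton)
  have sumpoly: "(\<Sum>k<M. coeff L k * z ^ k) = poly L z" for z
  proof -
    have "(\<Sum>k<M. coeff L k * z ^ k) = (\<Sum>k\<le>degree L. coeff L k * z ^ k)"
      using degM by (intro sum.mono_neutral_right) (auto simp: coeff_eq_0)
    then show ?thesis by (simp add: poly_altdef)
  qed
  have zero: "poly L (of_real (X b)) = 0" if "b \<in> I - {a}" for b
    unfolding L_def poly_prod using that fin by (auto intro!: prod_zero)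
  have "(\<Sum>k<M. coeff L k * (\<Sum>b\<in>I. c b * of_real (X b) ^ k))
      = (\<Sum>k<M. \<Sum>b\<in>I. c b * (coeff L k * of_real (X b) ^ k))"
    by (simp add: sum_distrib_left mult.left_commute)
  also have "\<dots> = (\<Sum>b\<in>I. \<Sum>k<M. c b * (coeff L k * of_real (X b) ^ k))" by (rule sum.swap)
  also have "\<dots> = (\<Sum>b\<in>I. c b * (\<Sum>k<M. coeff L k * of_real (X b) ^ k))"
    by (simp add: sum_distrib_left)
  also have "\<dots> = (\<Sum>b\<in>I. c b * poly L (of_real (X b)))" by (simp add: sumpoly)
  also have "\<dots> = c a * poly L (of_real (X a))"
    using fin a zero by (simp add: sum.remove)
  finally show ?thesis .
qed

lemma interpolation_coeff_bound:
  fixes X :: "'b \<Rightarrow> real" and c :: "'b \<Rightarrow> complex"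
  assumes fin: "finite I" and a: "a \<in> I" and M: "card I \<le> M"
  shows "norm (c a) * (\<Prod>b\<in>I-{a}. \<bar>X a - X b\<bar>)
     \<le> (\<Sum>k<M. norm (\<Sum>b\<in>I. c b * of_real (X b) ^ k)) * (\<Prod>b\<in>I-{a}. 1 + \<bar>X b\<bar>)"
proof -
  define L where "L = (\<Prod>b\<in>I-{a}. [:- complex_of_real (X b), 1:])"
  have "norm (poly L (of_real (X a))) = (\<Prod>b\<in>I-{a}. \<bar>X a - X b\<bar>)"
    unfolding L_def poly_prod by (simp add: prod_norm[symmetric] of_real_diff[symmetric] del: of_real_diff)
  then have "norm (c a) * (\<Prod>b\<in>I-{a}. \<bar>X a - X b\<bar>)
      = norm (\<Sum>k<M. coeff L k * (\<Sum>b\<in>I. c b * of_real (X b) ^ k))"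
    using lagrange_isolates_coeff[OF fin a M, of X c] unfolding L_def by (simp add: norm_mult)
  also have "\<dots> \<le> (\<Sum>k<M. norm (coeff L k) * norm (\<Sum>b\<in>I. c b * of_real (X b) ^ k))"
    by (rule order_trans[OF norm_sum]) (simp add: norm_mult)
  also have "\<dots> \<le> (\<Sum>k<M. (\<Prod>b\<in>I-{a}. 1 + \<bar>X b\<bar>) * norm (\<Sum>b\<in>I. c b * of_real (X b) ^ k))"
    using coeff_prod_linear_bound[of "I - {a}" "\<lambda>b. complex_of_real (X b)"] fin
    unfolding L_def by (intro sum_mono mult_right_mono) auto
  also have "\<dots> = (\<Sum>k<M. norm (\<Sum>b\<in>I. c b * of_real (X b) ^ k)) * (\<Prod>b\<in>I-{a}. 1 + \<bar>X b\<bar>)"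
    by (simp add: sum_distrib_left[symmetric] mult.commute)
  finally show ?thesis .
qed

section \<open>Polynomials of bounded degree and sup norms\<close>

lemma monomial_sum_bound:
  fixes c :: "nat \<times> nat \<Rightarrow> complex"
  assumes fin: "finite S" and deg: "\<forall>b\<in>S. fst b + snd b \<le> d" and r: "r \<ge> 1"
    and z: "norm z \<le> r" and w: "norm w \<le> r"
  shows "norm (\<Sum>b\<in>S. c b * z ^ fst b * w ^ snd b) \<le> (\<Sum>b\<in>S. norm (c b)) * r ^ d"
proof -
  have bound: "norm (c b * z ^ fst b * w ^ snd b) \<le> norm (c b) * r ^ d" if "b \<in> S" for b
  proof -
    have "norm (z ^ fst b * w ^ snd b) \<le> r ^ fst b * r ^ snd b"
      unfolding norm_mult norm_power using z w r by (intro mult_mono power_mono) auto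
    also have "\<dots> = r ^ (fst b + snd b)" by (simp add: power_add)
    also have "\<dots> \<le> r ^ d" using deg that r by (intro power_increasing) auto
    finally show ?thesis by (simp add: norm_mult mult.assoc mult_left_mono)
  qed
  have "norm (\<Sum>b\<in>S. c b * z ^ fst b * w ^ snd b) \<le> (\<Sum>b\<in>S. norm (c b * z ^ fst b * w ^ snd b))"
    by (rule norm_sum)
  also have "\<dots> \<le> (\<Sum>b\<in>S. norm (c b) * r ^ d)" by (rule sum_mono) (rule bound)
  also have "\<dots> = (\<Sum>b\<in>S. norm (c b)) * r ^ d" by (simp add: sum_distrib_right)
  finally show ?thesis .
qed

lemma polys_deg_grid_form:
  assumes "P \<in> polys_deg n"
  shows "\<exists>c. \<forall>z w. P (z, w) = (\<Sum>b\<in>grid n. c b * z ^ fst b * w ^ snd b)"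
proof -
  obtain c where c: "\<forall>z w. P (z, w) = (\<Sum>i\<le>n. \<Sum>j\<le>n - i. c i j * z ^ i * w ^ j)"
    using assms unfolding polys_deg_def by blast
  define c' where "c' b = (if fst b + snd b \<le> n then c (fst b) (snd b) else 0)" for b
  have "(\<Sum>b\<in>grid n. c' b * z ^ fst b * w ^ snd b) = (\<Sum>i\<le>n. \<Sum>j\<le>n - i. c i j * z ^ i * w ^ j)" for z w
  proof -
    have row: "(\<Sum>j\<le>n. c' (i, j) * z ^ i * w ^ j) = (\<Sum>j\<le>n - i. c i j * z ^ i * w ^ j)"
      if "i \<le> n" for i
    proof -
      have "(\<Sum>j\<le>n. c' (i, j) * z ^ i * w ^ j)
          = (\<Sum>j\<le>n. if j \<in> {..n - i} then c i j * z ^ i * w ^ j else 0)"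
        using that by (intro sum.cong) (auto simp: c'_def)
      also have "\<dots> = (\<Sum>j\<in>{..n} \<inter> {..n - i}. c i j * z ^ i * w ^ j)"
        using sum.inter_restrict[of "{..n}" "\<lambda>j. c i j * z ^ i * w ^ j" "{..n - i}"] by simp
      also have "{..n} \<inter> {..n - i} = {..n - i}" by auto
      finally show ?thesis .
    qed
    have "(\<Sum>b\<in>grid n. c' b * z ^ fst b * w ^ snd b) = (\<Sum>i\<le>n. \<Sum>j\<le>n. c' (i, j) * z ^ i * w ^ j)"
      by (simp add: sum.cartesian_product split_def)
    also have "\<dots> = (\<Sum>i\<le>n. \<Sum>j\<le>n - i. c i j * z ^ i * w ^ j)"
      by (rule sum.cong[OF refl]) (simp add: row)
    finally show ?thesis .
  qed
  then show ?thesis using c by metis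
qed

lemma supnorm_le: "A \<noteq> {} \<Longrightarrow> (\<And>x. x \<in> A \<Longrightarrow> norm (P x) \<le> B) \<Longrightarrow> supnorm A P \<le> B"
  unfolding supnorm_def by (intro cSup_least) auto

lemma supnorm_ge: "(\<And>x. x \<in> A \<Longrightarrow> norm (P x) \<le> B) \<Longrightarrow> x \<in> A \<Longrightarrow> norm (P x) \<le> supnorm A P"
  unfolding supnorm_def by (intro cSup_upper) (auto intro!: bdd_aboveI)

lemma monomial_delta_sum:
  assumes "i0 + j0 \<le> n"
  shows "(\<Sum>i\<le>n. \<Sum>j\<le>n - i. (if i = i0 \<and> j = j0 then (1::complex) else 0) * z ^ i * w ^ j) = z ^ i0 * w ^ j0"
proof -
  have "(\<Sum>j\<le>n - i. (if i = i0 \<and> j = j0 then (1::complex) else 0) * z ^ i * w ^ j)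
      = (if i = i0 then z ^ i0 * w ^ j0 else 0)" for i
  proof (cases "i = i0")
    case True
    have "(\<Sum>j\<le>n - i. (if i = i0 \<and> j = j0 then (1::complex) else 0) * z ^ i * w ^ j)
        = (\<Sum>j\<le>n - i. if j = j0 then z ^ i0 * w ^ j0 else 0)" using True by (intro sum.cong) auto
    then show ?thesis using True assms by (simp add: sum.delta)
  qed simp
  then show ?thesis using assms by (simp add: sum.delta)
qed

lemma const_one_in_polys: "(\<lambda>_. 1) \<in> polys_deg n"
  unfolding polys_deg_def
  by (rule CollectI, rule exI[of _ "\<lambda>i j. if i = 0 \<and> j = 0 then 1 else 0"])
     (simp add: monomial_delta_sum[of 0 0 n, simplified])

lemma Kset_nonempty: "Kset a \<noteq> {}"
proof -
  have "(0::complex) \<in> {z. norm z \<le> 1}" by simp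
  then show ?thesis unfolding Kset_def by blast
qed

lemma supnorm_Kset_one: "supnorm (Kset a) (\<lambda>_. 1) \<le> 1"
  by (rule supnorm_le[OF Kset_nonempty]) simp

lemma origin_in_bidisk: "(0, 0) \<in> bidisk" and point_01_in_bidisk: "(0, 1) \<in> bidisk"
  unfolding bidisk_def by simp_all

lemma exp_diff_ge: assumes "0 \<le> v" "v \<le> u" shows "u - v \<le> exp u - exp (v::real)"
proof -
  have "exp u - exp v = exp v * (exp (u - v) - 1)" by (simp add: algebra_simps flip: exp_add)
  moreover have "u - v \<le> exp (u - v) - 1" using exp_ge_add_one_self[of "u - v"] by linarith
  then have "1 * (u - v) \<le> exp v * (exp (u - v) - 1)" using assms by (intro mult_mono) auto
  ultimately show ?thesis by simp
qed

section \<open>The upper bound for E_n\<close>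

text \<open>Interpolation nodes: the frequencies, rescaled into [0, 1] and exponentiated.\<close>
definition node :: "real \<Rightarrow> nat \<Rightarrow> nat \<times> nat \<Rightarrow> real" where
  "node x M b = exp (freq x b / real M)"

text \<open>The resulting bound for polynomials of degree at most n that are bounded by 1 on K.\<close>
definition upper_const :: "real \<Rightarrow> nat \<Rightarrow> nat \<Rightarrow> real" where
  "upper_const x n s = real ((n+1)^2) ^ ((n+1)^2 + 2) * 4 ^ ((n+1)^2) * exp (gap_budget x n s)"

context irrational_unit
begin

text \<open>On the real segment z = t \<in> [0, 1] of K, a polynomial becomes an exponential sum
  with frequencies freq b, and it stays bounded by its sup norm on K.\<close>
lemma exp_sum_bound_on_segment:
  assumes c: "\<forall>z w. P (z, w) = (\<Sum>b\<in>grid n. c b * z ^ fst b * w ^ snd b)"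
    and PK: "supnorm (Kset \<alpha>) P \<le> 1" and t: "0 \<le> t" "t \<le> 1"
  shows "norm (\<Sum>b\<in>grid n. c b * exp (complex_of_real (freq \<alpha> b * t))) \<le> 1"
proof -
  define z where "z = complex_of_real t"
  have zK: "(exp z, exp (complex_of_real \<alpha> * z)) \<in> Kset \<alpha>" unfolding Kset_def z_def using t by auto
  have bounded: "norm (P y) \<le> (\<Sum>b\<in>grid n. norm (c b)) * exp 1 ^ (2 * n)"
    if y: "y \<in> Kset \<alpha>" for y
  proof -
    obtain u where u: "norm u \<le> 1" "y = (exp u, exp (complex_of_real \<alpha> * u))"
      using y unfolding Kset_def by auto
    have "norm (complex_of_real \<alpha> * u) \<le> 1"
      using u pos less_1 by (simp add: norm_mult) (metis abs_of_pos less_eq_real_def mult_le_one norm_ge_zero)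
    then have "norm (exp (complex_of_real \<alpha> * u)) \<le> exp 1" "norm (exp u) \<le> exp 1"
      using u norm_exp by (meson exp_le_cancel_iff order_trans)+
    then show ?thesis unfolding u(2) c[rule_format]
      by (intro monomial_sum_bound) auto
  qed
  have "P (exp z, exp (complex_of_real \<alpha> * z)) = (\<Sum>b\<in>grid n. c b * exp (complex_of_real (freq \<alpha> b * t)))"
  proof -
    have "exp z ^ fst b * exp (complex_of_real \<alpha> * z) ^ snd b = exp (complex_of_real (freq \<alpha> b * t))" for b
      unfolding z_def freq_def by (simp add: exp_of_nat_mult[symmetric] exp_add[symmetric] algebra_simps)
    then show ?thesis unfolding c[rule_format] by (simp add: mult.assoc)
  qed
  moreover have "norm (P (exp z, exp (complex_of_real \<alpha> * z))) \<le> supnorm (Kset \<alpha>) P"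
    by (rule supnorm_ge[OF bounded zK])
  ultimately show ?thesis using PK by simp
qed

lemma node_power:
  "complex_of_real (node \<alpha> M b) ^ k = exp (complex_of_real (freq \<alpha> b * (real k / real M)))"
proof -
  have "complex_of_real (node \<alpha> M b) ^ k = exp (of_nat k * complex_of_real (freq \<alpha> b / real M))"
    unfolding node_def by (simp only: exp_of_real exp_of_nat_mult)
  then show ?thesis by (simp add: algebra_simps)
qed

lemma node_bound:
  assumes "b \<in> grid n" shows "1 + \<bar>node \<alpha> ((n+1)^2) b\<bar> \<le> 4"
proof -
  have "freq \<alpha> b \<le> real n + 1 * real n"
    unfolding freq_def using assms pos less_1 by (intro add_mono mult_mono) auto
  also have "\<dots> \<le> real ((n+1)^2)" by (simp add: power2_eq_square algebra_simps)
  finally have "freq \<alpha> b / real ((n+1)^2) \<le> 1" by (simp add: field_simps)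
  then have "node \<alpha> ((n+1)^2) b \<le> exp 1" unfolding node_def by simp
  moreover have "exp (1::real) \<le> 3" using exp_le by simp
  moreover have "node \<alpha> ((n+1)^2) b > 0" unfolding node_def by simp
  ultimately show ?thesis by simp
qed

text \<open>Distinct nodes inherit the separation of the frequencies, since exp is 1-expanding.\<close>
lemma node_gap_bound:
  assumes n: "2 * int n < cf_den \<alpha> (Suc (Suc s))" and ab: "a \<in> grid n" "b \<in> grid n" "a \<noteq> b"
    and M: "M \<ge> 1"
  shows "exp (- gap_weight \<alpha> s a b) / real M \<le> \<bar>node \<alpha> M a - node \<alpha> M b\<bar>"
proof -
  have gap: "\<bar>freq \<alpha> a - freq \<alpha> b\<bar> / real M \<le> \<bar>node \<alpha> M a - node \<alpha> M b\<bar>"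
  proof (cases "freq \<alpha> b \<le> freq \<alpha> a")
    case True
    then have "freq \<alpha> a / real M - freq \<alpha> b / real M \<le> node \<alpha> M a - node \<alpha> M b"
      unfolding node_def using M freq_nonneg by (intro exp_diff_ge) (auto simp: divide_right_mono)
    then show ?thesis using True by (simp add: diff_divide_distrib)
  next
    case False
    then have "freq \<alpha> b / real M - freq \<alpha> a / real M \<le> node \<alpha> M b - node \<alpha> M a"
      unfolding node_def using M freq_nonneg by (intro exp_diff_ge) (auto simp: divide_right_mono)
    then show ?thesis using False by (simp add: diff_divide_distrib)
  qed
  have "exp (- gap_weight \<alpha> s a b) / real M \<le> \<bar>freq \<alpha> a - freq \<alpha> b\<bar> / real M"
    using gap_weight_bound[OF n ab] M by (intro divide_right_mono) auto
  then show ?thesis using gap by linarith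
qed

lemma node_product_bound:
  assumes n: "2 * int n < cf_den \<alpha> (Suc (Suc s))" and a: "a \<in> grid n"
  defines "M \<equiv> (n+1)^2"
  shows "exp (- gap_budget \<alpha> n s) / real M ^ M \<le> (\<Prod>b\<in>grid n - {a}. \<bar>node \<alpha> M a - node \<alpha> M b\<bar>)"
proof -
  have M1: "M \<ge> 1" unfolding M_def by simp
  have card: "card (grid n - {a}) \<le> M"
    using a unfolding M_def by (simp add: card_cartesian_product power2_eq_square)
  have "(\<Sum>b\<in>grid n - {a}. gap_weight \<alpha> s a b) \<le> (\<Sum>b\<in>grid n. gap_weight \<alpha> s a b)"
    by (intro sum_mono2) (auto simp: gap_weight_nonneg)
  also have "\<dots> \<le> gap_budget \<alpha> n s" by (rule gap_weight_sum[OF a])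
  finally have "exp (- gap_budget \<alpha> n s) \<le> exp (- (\<Sum>b\<in>grid n - {a}. gap_weight \<alpha> s a b))" by simp
  moreover have "real M ^ card (grid n - {a}) \<le> real M ^ M" using card M1 by (intro power_increasing) auto
  ultimately have "exp (- gap_budget \<alpha> n s) / real M ^ M
      \<le> exp (- (\<Sum>b\<in>grid n - {a}. gap_weight \<alpha> s a b)) / real M ^ card (grid n - {a})"
    using M1 by (intro frac_le) auto
  also have "\<dots> = (\<Prod>b\<in>grid n - {a}. exp (- gap_weight \<alpha> s a b) / real M)"
    by (simp add: prod_dividef exp_sum[symmetric] sum_negf)
  also have "\<dots> \<le> (\<Prod>b\<in>grid n - {a}. \<bar>node \<alpha> M a - node \<alpha> M b\<bar>)"
    using node_gap_bound[OF n a _ _ M1] by (intro prod_mono) auto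
  finally show ?thesis .
qed

lemma grid_coeff_bound:
  assumes n: "2 * int n < cf_den \<alpha> (Suc (Suc s))"
    and c: "\<forall>z w. P (z, w) = (\<Sum>b\<in>grid n. c b * z ^ fst b * w ^ snd b)"
    and PK: "supnorm (Kset \<alpha>) P \<le> 1" and a: "a \<in> grid n"
  defines "M \<equiv> (n+1)^2"
  shows "norm (c a) \<le> real M ^ (M + 1) * 4 ^ M * exp (gap_budget \<alpha> n s)"
proof -
  let ?X = "node \<alpha> M"
  let ?S = "\<Sum>k<M. norm (\<Sum>b\<in>grid n. c b * of_real (?X b) ^ k)"
  let ?R = "\<Prod>b\<in>grid n - {a}. 1 + \<bar>?X b\<bar>"
  have card: "card (grid n) = M" unfolding M_def by (simp add: card_cartesian_product power2_eq_square)
  have "?S \<le> (\<Sum>k<M. 1)"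
    unfolding node_power by (intro sum_mono exp_sum_bound_on_segment[OF c PK]) auto
  then have S: "?S \<le> real M" by simp
  have "?R \<le> (\<Prod>b\<in>grid n - {a}. 4)"
    using node_bound unfolding M_def by (intro prod_mono) auto
  also have "\<dots> \<le> 4 ^ M" using card a by (simp add: card_Diff_singleton power_increasing)
  finally have R: "?R \<le> 4 ^ M" .
  have "norm (c a) * (\<Prod>b\<in>grid n - {a}. \<bar>?X a - ?X b\<bar>) \<le> ?S * ?R"
    using interpolation_coeff_bound[where I = "grid n" and a = a and M = M and X = "node \<alpha> M" and c = c]
      a card by simp
  also have "\<dots> \<le> real M * 4 ^ M" using S R by (intro mult_mono) (auto intro: prod_nonneg)
  finally have interpolated: "norm (c a) * (\<Prod>b\<in>grid n - {a}. \<bar>?X a - ?X b\<bar>) \<le> real M * 4 ^ M" .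
  have "exp (- gap_budget \<alpha> n s) / real M ^ M \<le> (\<Prod>b\<in>grid n - {a}. \<bar>?X a - ?X b\<bar>)"
    using node_product_bound[OF n a] unfolding M_def .
  then have scaled: "norm (c a) * (exp (- gap_budget \<alpha> n s) / real M ^ M) \<le> real M * 4 ^ M"
    using interpolated by (meson mult_left_mono norm_ge_zero order_trans)
  have "exp (- gap_budget \<alpha> n s) / real M ^ M > 0" unfolding M_def by simp
  then have "norm (c a) \<le> real M * 4 ^ M / (exp (- gap_budget \<alpha> n s) / real M ^ M)"
    using scaled by (rule iffD2[OF pos_le_divide_eq])
  also have "\<dots> = real M ^ (M + 1) * 4 ^ M * exp (gap_budget \<alpha> n s)" by (simp add: exp_minus field_simps)
  finally show ?thesis .
qed

end

context irrational_unit
begin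

lemma poly_bound_on_bidisk:
  assumes n: "2 * int n < cf_den \<alpha> (Suc (Suc s))" and P: "P \<in> polys_deg n"
    and PK: "supnorm (Kset \<alpha>) P \<le> 1" and x: "x \<in> bidisk"
  shows "norm (P x) \<le> upper_const \<alpha> n s"
proof -
  define M where "M = (n+1)^2"
  obtain c where c: "\<forall>z w. P (z, w) = (\<Sum>b\<in>grid n. c b * z ^ fst b * w ^ snd b)"
    using polys_deg_grid_form[OF P] by blast
  obtain z w where zw: "x = (z, w)" "norm z \<le> 1" "norm w \<le> 1" using x unfolding bidisk_def by auto
  have "norm (P x) \<le> (\<Sum>b\<in>grid n. norm (c b)) * 1 ^ (2 * n)"
    unfolding zw c[rule_format] by (rule monomial_sum_bound) (use zw in auto)
  also have "\<dots> \<le> (\<Sum>b\<in>grid n. real M ^ (M + 1) * 4 ^ M * exp (gap_budget \<alpha> n s))"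
    unfolding M_def power_one mult_1_right by (intro sum_mono grid_coeff_bound[OF n c PK])
  also have "\<dots> = upper_const \<alpha> n s"
    unfolding upper_const_def M_def by (simp add: card_cartesian_product power2_eq_square)
  finally show ?thesis .
qed

lemma supnorm_bidisk_le_upper_const:
  assumes "2 * int n < cf_den \<alpha> (Suc (Suc s))" and "P \<in> polys_deg n" and "supnorm (Kset \<alpha>) P \<le> 1"
  shows "supnorm bidisk P \<le> upper_const \<alpha> n s"
proof (rule supnorm_le)
  show "bidisk \<noteq> {}" using origin_in_bidisk by blast
qed (rule poly_bound_on_bidisk[OF assms])

text \<open>The values entering the supremum that defines E_n; they are bounded above, so E_n
  dominates each of them, and they include the value 1 of the constant polynomial.\<close>
abbreviation admissible_values :: "nat \<Rightarrow> real set" where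
  "admissible_values n \<equiv> {supnorm bidisk P |P. P \<in> polys_deg n \<and> supnorm (Kset \<alpha>) P \<le> 1}"

lemma admissible_values_le:
  assumes "2 * int n < cf_den \<alpha> (Suc (Suc s))" and "v \<in> admissible_values n"
  shows "v \<le> upper_const \<alpha> n s"
proof -
  obtain P where "v = supnorm bidisk P" "P \<in> polys_deg n" "supnorm (Kset \<alpha>) P \<le> 1"
    using assms(2) by blast
  then show ?thesis using supnorm_bidisk_le_upper_const[OF assms(1)] by simp
qed

lemma poly_value_le_E_n:
  assumes P: "P \<in> polys_deg n" and PK: "supnorm (Kset \<alpha>) P \<le> 1" and x: "x \<in> bidisk"
  shows "norm (P x) \<le> E_n \<alpha> n"
proof -
  obtain s where s: "2 * int n < cf_den \<alpha> (Suc (Suc s))" using den_exceeds by blast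
  have "norm (P x) \<le> supnorm bidisk P"
    by (rule supnorm_ge[OF poly_bound_on_bidisk[OF s P PK] x])
  also have "\<dots> \<le> E_n \<alpha> n" unfolding E_n_def
  proof (rule cSup_upper)
    show "supnorm bidisk P \<in> admissible_values n" using P PK by blast
    show "bdd_above (admissible_values n)"
      by (rule bdd_aboveI[of _ "upper_const \<alpha> n s"]) (rule admissible_values_le[OF s])
  qed
  finally show ?thesis .
qed

lemma E_n_le_upper_const:
  assumes "2 * int n < cf_den \<alpha> (Suc (Suc s))"
  shows "E_n \<alpha> n \<le> upper_const \<alpha> n s"
  unfolding E_n_def
proof (rule cSup_least)
  show "admissible_values n \<noteq> {}" using const_one_in_polys supnorm_Kset_one by blast
qed (rule admissible_values_le[OF assms])

lemma E_n_ge_1: "E_n \<alpha> n \<ge> 1"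
  using poly_value_le_E_n[OF const_one_in_polys supnorm_Kset_one origin_in_bidisk] by simp

lemma e_n_nonneg: "e_n \<alpha> n \<ge> 0"
  unfolding e_n_def using E_n_ge_1 by simp

lemma e_n_upper:
  assumes "2 * int n < cf_den \<alpha> (Suc (Suc s))"
  shows "e_n \<alpha> n \<le> ((real n+1)^2 + 2) * ln ((real n+1)^2) + (real n+1)^2 * ln 4 + gap_budget \<alpha> n s"
proof -
  have "e_n \<alpha> n \<le> ln (upper_const \<alpha> n s)" unfolding e_n_def
    using E_n_le_upper_const[OF assms] E_n_ge_1[of n] by (subst ln_le_cancel_iff) auto
  also have "\<dots> = ln (real ((n+1)^2) ^ ((n+1)^2 + 2)) + ln (4 ^ ((n+1)^2)) + gap_budget \<alpha> n s"
    unfolding upper_const_def by (simp add: ln_mult del: of_nat_power)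
  also have "\<dots> = ((real n+1)^2 + 2) * ln ((real n+1)^2) + (real n+1)^2 * ln 4 + gap_budget \<alpha> n s"
    by (subst (1 2) ln_realpow) (simp_all add: algebra_simps)
  finally show ?thesis .
qed

end

section \<open>The lower bound for e_(q_s)\<close>

definition gap_poly :: "real \<Rightarrow> nat \<Rightarrow> nat \<Rightarrow> complex \<times> complex \<Rightarrow> complex" where
  "gap_poly \<kappa> p q x = complex_of_real \<kappa> * (snd x ^ q - fst x ^ p)"

lemma gap_poly_in_polys:
  assumes "p \<le> q" shows "gap_poly \<kappa> p q \<in> polys_deg q"
proof -
  define d where "d i j = (if i = 0 \<and> j = q then 1 else 0) - (if i = p \<and> j = 0 then (1::complex) else 0)" for i j
  have "(\<Sum>i\<le>q. \<Sum>j\<le>q - i. complex_of_real \<kappa> * d i j * z ^ i * w ^ j)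
      = complex_of_real \<kappa> * ((\<Sum>i\<le>q. \<Sum>j\<le>q - i. (if i = 0 \<and> j = q then 1 else 0) * z ^ i * w ^ j)
          - (\<Sum>i\<le>q. \<Sum>j\<le>q - i. (if i = p \<and> j = 0 then 1 else 0) * z ^ i * w ^ j))" for z w
    unfolding d_def by (simp add: sum_distrib_left sum_subtractf algebra_simps)
  also have "\<dots> z w = gap_poly \<kappa> p q (z, w)" for z w
    using monomial_delta_sum[of 0 q q z w] monomial_delta_sum[of p 0 q z w] assms
    unfolding gap_poly_def by simp
  finally have expand: "gap_poly \<kappa> p q (z, w) = (\<Sum>i\<le>q. \<Sum>j\<le>q - i. complex_of_real \<kappa> * d i j * z ^ i * w ^ j)"
    for z w by simp
  show ?thesis unfolding polys_deg_def
    by (rule CollectI, rule exI[of _ "\<lambda>i j. complex_of_real \<kappa> * d i j"]) (simp add: expand)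
qed

text \<open>If q x is close to the integer p, then exp(x u)^q - exp(u)^p is small on the unit disk:
  it equals exp(p u) (exp((q x - p) u) - 1).\<close>
lemma exp_power_difference_bound:
  fixes x :: real and u :: complex and p q :: nat
  assumes u: "norm u \<le> 1" and close: "\<bar>real q * x - real p\<bar> \<le> 1"
  shows "norm (exp (complex_of_real x * u) ^ q - exp u ^ p) \<le> exp (real p) * (exp 1 * \<bar>real q * x - real p\<bar>)"
proof -
  define \<epsilon> where "\<epsilon> = real q * x - real p"
  define v where "v = complex_of_real \<epsilon> * u"
  have "of_nat q * (complex_of_real x * u) = of_nat p * u + v"
  proof -
    have "of_nat q * complex_of_real x = of_nat p + complex_of_real \<epsilon>"
      unfolding \<epsilon>_def by (metis add_diff_cancel_left' diff_add_cancel of_real_add of_real_mult of_real_of_nat_eq)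
    then show ?thesis unfolding v_def by (metis distrib_right mult.assoc)
  qed
  then have diff: "exp (complex_of_real x * u) ^ q - exp u ^ p = exp (of_nat p * u) * (exp v - 1)"
    by (simp add: exp_of_nat_mult[symmetric] exp_add algebra_simps)
  have "norm (of_nat p * u) \<le> real p" using u by (simp add: norm_mult mult_left_le)
  then have "norm (exp (of_nat p * u)) \<le> exp (real p)"
    using norm_exp[of "of_nat p * u"] by (meson exp_le_cancel_iff order_trans)
  moreover have "norm (exp v - 1) \<le> exp 1 * \<bar>\<epsilon>\<bar>"
  proof -
    have nv: "norm v \<le> \<bar>\<epsilon>\<bar>" unfolding v_def using u by (simp add: norm_mult mult_left_le)
    have "norm (exp v - 1) \<le> exp (norm v) * norm v ^ Suc 0 / fact 0"
      using Taylor_exp_field[of v 0] by simp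
    also have "\<dots> \<le> exp 1 * \<bar>\<epsilon>\<bar>" using nv close unfolding \<epsilon>_def by (simp add: mult_mono)
    finally show ?thesis .
  qed
  ultimately show ?thesis unfolding diff \<epsilon>_def norm_mult by (intro mult_mono) auto
qed

context irrational_unit
begin

lemma num_bounds:
  assumes "s \<ge> 1"
  shows "1 \<le> cf_num \<alpha> (Suc s)" "cf_num \<alpha> (Suc s) \<le> cf_den \<alpha> (Suc s)"
proof -
  show p1: "1 \<le> cf_num \<alpha> (Suc s)"
    using cf_num_pos[OF irrational pos less_1, of "s - 1"] assms by (simp add: Suc_diff_1 del: cf_num.simps)
  define q where "q = real_of_int (cf_den \<alpha> (Suc s))"
  have "\<bar>cf_err \<alpha> (Suc s)\<bar> < 1 / of_int (cf_den \<alpha> (Suc (Suc s)))"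
    by (rule cf_err_bounds(2)[OF irrational pos less_1])
  also have "\<dots> \<le> 1" using den_pos_real[of "Suc s"] by simp
  finally have "of_int (cf_num \<alpha> (Suc s)) < q * \<alpha> + 1" unfolding cf_err_def q_def by linarith
  moreover have "q * \<alpha> < q" using den_pos_real[of s] less_1 unfolding q_def by simp
  ultimately show "cf_num \<alpha> (Suc s) \<le> cf_den \<alpha> (Suc s)" unfolding q_def by linarith
qed

lemma e_n_lower:
  assumes s: "s \<ge> 1"
  shows "ln (of_int (cf_den \<alpha> (Suc (Suc s)))) - of_int (cf_den \<alpha> (Suc s)) - 1
           \<le> e_n \<alpha> (nat (cf_den \<alpha> (Suc s)))"
proof -
  define q where "q = nat (cf_den \<alpha> (Suc s))"
  define p where "p = nat (cf_num \<alpha> (Suc s))"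
  define Q where "Q = real_of_int (cf_den \<alpha> (Suc (Suc s)))"
  define \<kappa> :: real where "\<kappa> = Q / exp (real q + 1)"
  have qp: "real q = of_int (cf_den \<alpha> (Suc s))" "real p = of_int (cf_num \<alpha> (Suc s))" "1 \<le> p" "p \<le> q"
    using num_bounds[OF s] den_pos[of s] unfolding q_def p_def by auto
  have Q1: "Q \<ge> 1" using den_pos_real[of "Suc s"] unfolding Q_def by simp
  have \<kappa>: "\<kappa> > 0" unfolding \<kappa>_def using Q1 by simp
  have err: "\<bar>real q * \<alpha> - real p\<bar> < 1 / Q"
    using cf_err_bounds(2)[OF irrational pos less_1, of s] unfolding cf_err_def qp Q_def by simp
  also have "1 / Q \<le> 1" using Q1 by simp
  finally have err1: "\<bar>real q * \<alpha> - real p\<bar> \<le> 1" by simp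
  have "supnorm (Kset \<alpha>) (gap_poly \<kappa> p q) \<le> 1"
  proof (rule supnorm_le[OF Kset_nonempty])
    fix y assume "y \<in> Kset \<alpha>"
    then obtain u where u: "norm u \<le> 1" "y = (exp u, exp (complex_of_real \<alpha> * u))" unfolding Kset_def by auto
    have "norm (gap_poly \<kappa> p q y) = \<kappa> * norm (exp (complex_of_real \<alpha> * u) ^ q - exp u ^ p)"
      unfolding gap_poly_def u(2) using \<kappa> by (simp add: norm_mult)
    also have "\<dots> \<le> \<kappa> * (exp (real p) * (exp 1 * \<bar>real q * \<alpha> - real p\<bar>))"
      by (rule mult_left_mono[OF exp_power_difference_bound[OF u(1) err1]]) (use \<kappa> in simp)
    also have "\<dots> \<le> \<kappa> * (exp (real q) * (exp 1 * (1 / Q)))"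
    proof -
      have "exp (real p) * (exp 1 * \<bar>real q * \<alpha> - real p\<bar>) \<le> exp (real q) * (exp 1 * (1 / Q))"
        using qp(4) err by (intro mult_mono mult_left_mono) auto
      then show ?thesis by (rule mult_left_mono) (use \<kappa> in simp)
    qed
    also have "\<dots> = 1" unfolding \<kappa>_def using Q1 by (simp add: exp_add field_simps)
    finally show "norm (gap_poly \<kappa> p q y) \<le> 1" .
  qed
  then have "norm (gap_poly \<kappa> p q (0, 1)) \<le> E_n \<alpha> q"
    by (rule poly_value_le_E_n[OF gap_poly_in_polys[OF qp(4)] _ point_01_in_bidisk])
  moreover have "gap_poly \<kappa> p q (0, 1) = complex_of_real \<kappa>"
    unfolding gap_poly_def using qp(3) by (simp add: power_0_left)
  ultimately have "\<kappa> \<le> E_n \<alpha> q" using \<kappa> by simp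
  then have "ln \<kappa> \<le> e_n \<alpha> q" unfolding e_n_def using \<kappa> by simp
  moreover have "ln \<kappa> = ln Q - real q - 1" unfolding \<kappa>_def using Q1 by (simp add: ln_div)
  ultimately show ?thesis unfolding q_def Q_def using qp(1) q_def by simp
qed

end

section \<open>Elementary estimates\<close>

lemma ln2_ge_half: "ln (2::real) \<ge> 1/2"
proof -
  have "exp (1/2::real) ^ 2 = exp 1" by (simp add: exp_of_nat_mult[symmetric])
  also have "\<dots> \<le> 2 ^ 2" using exp_le by simp
  finally have "exp (1/2::real) \<le> 2" by (rule power2_le_imp_le) simp
  then show ?thesis by (subst ln_ge_iff) auto
qed

lemma linear_le_square_ln:
  fixes q :: real assumes "q \<ge> 2"
  shows "q + 1 \<le> 2 * (q^2 * ln q)"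
proof -
  have "2 * q \<le> q * q" using assms by (intro mult_right_mono) auto
  then have "q + 1 \<le> q * q" using assms by linarith
  then have "q + 1 \<le> q^2" by (simp add: power2_eq_square)
  moreover have "ln q \<ge> 1/2" using ln2_ge_half assms ln_le_cancel_iff[of 2 q] by linarith
  then have "q^2 * (1/2) \<le> q^2 * ln q" by (rule mult_left_mono) simp
  ultimately show ?thesis by linarith
qed

lemma degree_terms_bound:
  fixes N q :: real
  assumes N: "N \<ge> 2" and q: "1 \<le> q" "q \<le> 2 * N"
  shows "((N+1)^2 + 2) * ln ((N+1)^2) + (N+1)^2 * ln 4 + 2 * (N + 1) * ln (2 * q) \<le> 27 * (N^2 * ln N)"
proof -
  define L where "L = ln N"
  have l2: "ln 2 \<le> L" unfolding L_def using N by simp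
  have NN: "N * N \<ge> 2 * N" using N by (intro mult_right_mono) auto
  have N2: "N^2 = N * N" by (simp add: power2_eq_square)
  have Np: "N \<le> N^2" using NN N N2 by linarith
  have "(N+1)^2 + 2 = N * N + 2 * N + 3" by (simp add: power2_eq_square algebra_simps)
  then have M3: "(N+1)^2 + 2 \<le> 3 * N^2" using NN N N2 by linarith
  have "N + 1 \<le> N^2" using NN N N2 by linarith
  then have "(N+1)^2 \<le> (N^2)^2" by (rule power_mono) (use N in simp)
  then have "ln ((N+1)^2) \<le> ln ((N^2)^2)" using N by (subst ln_le_cancel_iff) auto
  also have "\<dots> = 4 * L" unfolding L_def using N by (simp add: ln_realpow flip: power_mult)
  finally have t1: "((N+1)^2 + 2) * ln ((N+1)^2) \<le> (3 * N^2) * (4 * L)"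
    using M3 N by (intro mult_mono) auto
  have "ln (4::real) \<le> 2 * L" using l2 ln_realpow[of 2 2] by simp
  then have t2: "(N+1)^2 * ln 4 \<le> (3 * N^2) * (2 * L)" using M3 by (intro mult_mono) auto
  have "N * N \<ge> 4" using NN N by linarith
  then have "4 * N \<le> N * N * N" using N by (intro mult_right_mono) auto
  then have "2 * q \<le> N * N * N" using q by linarith
  then have "2 * q \<le> N^3" by (simp add: power3_eq_cube)
  then have "ln (2 * q) \<le> ln (N^3)" using q N by (subst ln_le_cancel_iff) auto
  also have "\<dots> = 3 * L" unfolding L_def using N by (simp add: ln_realpow)
  finally have lnq: "ln (2 * q) \<le> 3 * L" .
  have "2 * (N + 1) * ln (2 * q) \<le> (3 * N) * (3 * L)"
    by (rule mult_mono) (use N q lnq in auto)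
  also have "\<dots> \<le> 9 * (N^2 * L)" using Np l2 ln2_ge_half by (simp add: mult_right_mono)
  finally show ?thesis using t1 t2 unfolding L_def by (simp add: algebra_simps)
qed

lemma congruence_term_bound:
  fixes N q Q d B C0 :: real
  assumes N: "N \<ge> 2" and q: "1 \<le> q" "q \<le> 2 * N" and Q: "Q \<ge> 1"
    and d: "d \<ge> 0" "d * q \<le> N" and B: "B \<ge> 0" and C0: "C0 \<ge> 0"
    and lnQ: "ln Q \<le> B * q^2 * ln q + C0"
  shows "2 * ln (2 * Q) * (d + 1) \<le> (4 + 8 * C0 + 24 * B) * (N^2 * ln N)"
proof -
  define L where "L = ln N"
  have l2: "ln 2 \<le> L" unfolding L_def using N by simp
  have Lh: "L \<ge> 1/2" using l2 ln2_ge_half by linarith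
  have Np: "N \<le> N^2" using N by (simp add: power2_eq_square)
  have "d * 1 \<le> d * q" using d q by (intro mult_left_mono) auto
  then have "d \<le> N" using d by linarith
  then have d1: "d + 1 \<le> 2 * N" using N by linarith
  have "2 * N \<le> N * N" using N by (intro mult_right_mono) auto
  then have "q \<le> N * N" using q by linarith
  then have "ln q \<le> ln (N^2)" using q by (subst ln_le_cancel_iff) (auto simp: power2_eq_square)
  also have "\<dots> = 2 * L" unfolding L_def using N by (simp add: ln_realpow)
  finally have lnq: "0 \<le> ln q" "ln q \<le> 2 * L" using q by auto
  have "q^2 * (d + 1) = q * (d * q) + q^2" by (simp add: power2_eq_square algebra_simps)
  also have "\<dots> \<le> (2 * N) * N + (2 * N)^2" using q d by (intro add_mono mult_mono power_mono) auto
  finally have qd: "q^2 * (d + 1) \<le> 6 * N^2" by (simp add: power2_eq_square)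
  have split: "2 * ln (2 * Q) * (d + 1) = 2 * ln 2 * (d + 1) + 2 * ln Q * (d + 1)"
    using Q by (simp add: ln_mult algebra_simps)
  have t1: "2 * ln 2 * (d + 1) \<le> 4 * (N^2 * L)"
  proof -
    have "2 * ln 2 * (d + 1) \<le> 2 * L * (2 * N)" using l2 d1 d Lh by (intro mult_mono) auto
    also have "\<dots> \<le> 4 * (N^2 * L)" using Np Lh by (simp add: mult_right_mono)
    finally show ?thesis .
  qed
  have t2: "2 * ln Q * (d + 1) \<le> 2 * C0 * (d + 1) + 2 * B * (q^2 * (d + 1)) * ln q"
  proof -
    have "2 * ln Q * (d + 1) \<le> 2 * (B * q^2 * ln q + C0) * (d + 1)"
      using lnQ d by (intro mult_right_mono) auto
    then show ?thesis by (simp add: algebra_simps)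
  qed
  have t3: "2 * C0 * (d + 1) \<le> 8 * C0 * (N^2 * L)"
  proof -
    have "N^2 * 2 \<le> N^2 * (4 * L)" using Lh by (intro mult_left_mono) auto
    then have "d + 1 \<le> N^2 * (4 * L)" using d1 Np by linarith
    then have "2 * C0 * (d + 1) \<le> 2 * C0 * (N^2 * (4 * L))" using C0 by (intro mult_left_mono) auto
    then show ?thesis by (simp add: algebra_simps)
  qed
  have t4: "2 * B * (q^2 * (d + 1)) * ln q \<le> 24 * B * (N^2 * L)"
  proof -
    have "2 * B * (q^2 * (d + 1)) \<le> 2 * B * (6 * N^2)" by (rule mult_left_mono[OF qd]) (use B in simp)
    then have "2 * B * (q^2 * (d + 1)) * ln q \<le> 2 * B * (6 * N^2) * (2 * L)"
      by (rule mult_mono[OF _ lnq(2)]) (use B lnq in simp_all)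
    then show ?thesis by (simp add: algebra_simps)
  qed
  show ?thesis using split t1 t2 t3 t4 unfolding L_def by (simp add: algebra_simps)
qed
section \<open>The three implications\<close>

context irrational_unit
begin

lemma bracketing_denominator:
  assumes "n \<ge> 2"
  obtains s where "cf_den \<alpha> (Suc s) \<le> 2 * int n" "2 * int n < cf_den \<alpha> (Suc (Suc s))"
proof -
  define k where "k = (LEAST k. 2 * int n < cf_den \<alpha> (Suc k))"
  have "\<exists>k. 2 * int n < cf_den \<alpha> (Suc k)" using den_exceeds by blast
  then have k: "2 * int n < cf_den \<alpha> (Suc k)" unfolding k_def by (rule LeastI_ex)
  then obtain s where ks: "k = Suc s" using assms by (cases k) auto
  have "s < k" using ks by simp
  then have "\<not> 2 * int n < cf_den \<alpha> (Suc s)" unfolding k_def by (rule not_less_Least)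
  then have "cf_den \<alpha> (Suc s) \<le> 2 * int n" by simp
  then show ?thesis using k unfolding ks by (rule that)
qed

text \<open>Condition (c) means log q_(s+1) = O(q_s^2 log q_s); the two initial indices with
  q_s = 1 are absorbed into an additive constant.\<close>
lemma ln_next_den_bound:
  assumes "\<exists>B. \<forall>s. cf_q \<alpha> s \<ge> 2 \<longrightarrow>
    \<bar>ln (real_of_int (cf_q \<alpha> (Suc s))) / (real_of_int (cf_q \<alpha> s) ^ 2 * ln (real_of_int (cf_q \<alpha> s)))\<bar> \<le> B"
  obtains B C0 :: real where "B \<ge> 0" "C0 \<ge> 0"
    "\<And>s. ln (of_int (cf_den \<alpha> (Suc (Suc s))))
           \<le> B * (of_int (cf_den \<alpha> (Suc s)))^2 * ln (of_int (cf_den \<alpha> (Suc s))) + C0"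
proof -
  obtain B where B: "\<forall>s. cf_q \<alpha> s \<ge> 2 \<longrightarrow>
    \<bar>ln (real_of_int (cf_q \<alpha> (Suc s))) / (real_of_int (cf_q \<alpha> s) ^ 2 * ln (real_of_int (cf_q \<alpha> s)))\<bar> \<le> B"
    using assms by blast
  define C0 where "C0 = ln (real_of_int (cf_den \<alpha> 2)) + ln (real_of_int (cf_den \<alpha> 3))"
  have ln23: "ln (real_of_int (cf_den \<alpha> 2)) \<ge> 0" "ln (real_of_int (cf_den \<alpha> 3)) \<ge> 0"
    using den_pos_real[of 1] den_pos_real[of 2] by (simp_all add: numeral_2_eq_2 numeral_3_eq_3 del: cf_den.simps)
  have "ln (of_int Q) \<le> max B 0 * (of_int q)^2 * ln (of_int q) + C0"
    if q: "q = cf_den \<alpha> (Suc s)" and Q: "Q = cf_den \<alpha> (Suc (Suc s))" for s q Q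
  proof (cases "q \<ge> 2")
    case True
    define D where "D = (of_int q)^2 * ln (of_int q :: real)"
    have "D > 0" unfolding D_def using True by simp
    moreover have "\<bar>ln (of_int Q) / D\<bar> \<le> B"
      using B True unfolding D_def q Q cf_q_eq_den by auto
    ultimately have "ln (of_int Q) \<le> B * D" by (simp add: abs_le_iff divide_le_eq)
    also have "\<dots> \<le> max B 0 * D" using \<open>D > 0\<close> by (intro mult_right_mono) auto
    finally have "ln (of_int Q) \<le> max B 0 * D" .
    then show ?thesis using ln23 unfolding C0_def D_def by (simp add: mult.assoc)
  next
    case False
    then have "q = 1" using den_pos[of s] q by simp
    then have "s = 0 \<or> s = 1" using cf_den_ge_index[OF irrational, of s] q by auto
    then have "ln (of_int Q) \<le> C0"
      using ln23 unfolding Q C0_def by (auto simp: numeral_2_eq_2 numeral_3_eq_3)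
    then show ?thesis using \<open>q = 1\<close> by simp
  qed
  moreover have "C0 \<ge> 0" using ln23 unfolding C0_def by simp
  ultimately show ?thesis using that[of "max B 0" C0] by simp
qed

text \<open>(c) \<Longrightarrow> (a): for q_s \<le> 2n < q_(s+1), every term of the upper bound is O(n^2 log n).\<close>
lemma bounded_gap_imp_bounded_e_n:
  assumes "\<exists>B. \<forall>s. cf_q \<alpha> s \<ge> 2 \<longrightarrow>
    \<bar>ln (real_of_int (cf_q \<alpha> (Suc s))) / (real_of_int (cf_q \<alpha> s) ^ 2 * ln (real_of_int (cf_q \<alpha> s)))\<bar> \<le> B"
  shows "\<exists>B. \<forall>n::nat. n \<ge> 2 \<longrightarrow> \<bar>e_n \<alpha> n / (real n ^ 2 * ln (real n))\<bar> \<le> B"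
proof -
  obtain B C0 :: real where B: "B \<ge> 0" "C0 \<ge> 0" and lnQ: "\<And>s. ln (of_int (cf_den \<alpha> (Suc (Suc s))))
           \<le> B * (of_int (cf_den \<alpha> (Suc s)))^2 * ln (of_int (cf_den \<alpha> (Suc s))) + C0"
    using ln_next_den_bound[OF assms] by blast
  have "\<bar>e_n \<alpha> n / (real n ^ 2 * ln (real n))\<bar> \<le> 31 + 8 * C0 + 24 * B" if n: "n \<ge> 2" for n
  proof -
    obtain s where sq: "cf_den \<alpha> (Suc s) \<le> 2 * int n" and sQ: "2 * int n < cf_den \<alpha> (Suc (Suc s))"
      using bracketing_denominator[OF n] .
    define q where "q = cf_den \<alpha> (Suc s)"
    define d where "d = n div nat q"
    have q1: "q \<ge> 1" using den_pos unfolding q_def by simp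
    have "real_of_int q \<le> real_of_int (2 * int n)" using sq unfolding q_def by (simp only: of_int_le_iff)
    then have q2n: "real_of_int q \<le> 2 * real n" by simp
    have "real (d * nat q) \<le> real n" unfolding d_def by (simp only: of_nat_le_iff div_times_less_eq_dividend)
    then have dq: "real d * of_int q \<le> real n" using q1 by simp
    have "e_n \<alpha> n \<le> ((real n+1)^2 + 2) * ln ((real n+1)^2) + (real n+1)^2 * ln 4
        + 2 * (real n + 1) * ln (2 * of_int q)
        + 2 * ln (2 * of_int (cf_den \<alpha> (Suc (Suc s)))) * (real d + 1)"
      using e_n_upper[OF sQ] unfolding gap_budget_def q_def d_def by simp
    also have "\<dots> \<le> 27 * (real n^2 * ln (real n)) + (4 + 8 * C0 + 24 * B) * (real n^2 * ln (real n))"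
    proof (rule add_mono)
      show "((real n+1)^2 + 2) * ln ((real n+1)^2) + (real n+1)^2 * ln 4 + 2 * (real n + 1) * ln (2 * of_int q)
          \<le> 27 * (real n^2 * ln (real n))"
        by (rule degree_terms_bound) (use n q1 q2n in auto)
      show "2 * ln (2 * of_int (cf_den \<alpha> (Suc (Suc s)))) * (real d + 1)
          \<le> (4 + 8 * C0 + 24 * B) * (real n^2 * ln (real n))"
        by (rule congruence_term_bound[OF _ _ _ den_pos_real _ dq B lnQ[of s, folded q_def]])
           (use n q1 q2n in auto)
    qed
    finally have "e_n \<alpha> n \<le> (31 + 8 * C0 + 24 * B) * (real n^2 * ln (real n))"
      by (simp add: algebra_simps)
    moreover have "real n^2 * ln (real n) > 0" using n by simp
    ultimately show ?thesis using e_n_nonneg[of n] by (simp add: divide_le_eq)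
  qed
  then show ?thesis by blast
qed

text \<open>(b) \<Longrightarrow> (c): by the lower bound, log q_(s+1) \<le> e_(q_s) + q_s + 1, and
  q_s + 1 \<le> 2 q_s^2 log q_s.\<close>
lemma bounded_convergent_e_n_imp_bounded_gap:
  assumes "\<exists>B. \<forall>s. cf_q \<alpha> s \<ge> 2 \<longrightarrow>
    \<bar>e_n \<alpha> (nat (cf_q \<alpha> s)) / (real_of_int (cf_q \<alpha> s) ^ 2 * ln (real_of_int (cf_q \<alpha> s)))\<bar> \<le> B"
  shows "\<exists>B. \<forall>s. cf_q \<alpha> s \<ge> 2 \<longrightarrow>
    \<bar>ln (real_of_int (cf_q \<alpha> (Suc s))) / (real_of_int (cf_q \<alpha> s) ^ 2 * ln (real_of_int (cf_q \<alpha> s)))\<bar> \<le> B"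
proof -
  obtain B where B: "\<forall>s. cf_q \<alpha> s \<ge> 2 \<longrightarrow>
    \<bar>e_n \<alpha> (nat (cf_q \<alpha> s)) / (real_of_int (cf_q \<alpha> s) ^ 2 * ln (real_of_int (cf_q \<alpha> s)))\<bar> \<le> B"
    using assms by blast
  have "\<bar>ln (real_of_int (cf_q \<alpha> (Suc s))) / (real_of_int (cf_q \<alpha> s) ^ 2 * ln (real_of_int (cf_q \<alpha> s)))\<bar> \<le> B + 2"
    if s: "cf_q \<alpha> s \<ge> 2" for s
  proof -
    define q where "q = real_of_int (cf_q \<alpha> s)"
    define Q where "Q = real_of_int (cf_q \<alpha> (Suc s))"
    define D where "D = q^2 * ln q"
    have q2: "q \<ge> 2" using s unfolding q_def by simp
    have D: "D > 0" unfolding D_def using q2 by simp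
    have "s \<ge> 1" using s by (cases s) auto
    then have "ln Q - q - 1 \<le> e_n \<alpha> (nat (cf_q \<alpha> s))"
      using e_n_lower[of s] unfolding q_def Q_def cf_q_eq_den by simp
    moreover have "e_n \<alpha> (nat (cf_q \<alpha> s)) \<le> B * D"
    proof -
      have "\<bar>e_n \<alpha> (nat (cf_q \<alpha> s)) / D\<bar> \<le> B" using B s unfolding D_def q_def by simp
      then show ?thesis using D by (simp add: abs_le_iff divide_le_eq)
    qed
    moreover have "q + 1 \<le> 2 * D" unfolding D_def by (rule linear_le_square_ln[OF q2])
    ultimately have "ln Q / D \<le> B + 2" using D by (simp add: divide_le_eq algebra_simps)
    moreover have "ln Q \<ge> 0" using den_pos_real[of "Suc s"] unfolding Q_def cf_q_eq_den by simp
    ultimately show ?thesis using D unfolding D_def q_def Q_def by simp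
  qed
  then show ?thesis by blast
qed

end

lemma bounded_e_n_imp_bounded_convergent_e_n:
  assumes "\<exists>B. \<forall>n::nat. n \<ge> 2 \<longrightarrow> \<bar>e_n \<alpha> n / (real n ^ 2 * ln (real n))\<bar> \<le> B"
  shows "\<exists>B. \<forall>s. cf_q \<alpha> s \<ge> 2 \<longrightarrow>
    \<bar>e_n \<alpha> (nat (cf_q \<alpha> s)) / (real_of_int (cf_q \<alpha> s) ^ 2 * ln (real_of_int (cf_q \<alpha> s)))\<bar> \<le> B"
proof -
  obtain B where B: "\<forall>n::nat. n \<ge> 2 \<longrightarrow> \<bar>e_n \<alpha> n / (real n ^ 2 * ln (real n))\<bar> \<le> B"
    using assms by blast
  have "\<bar>e_n \<alpha> (nat (cf_q \<alpha> s)) / (real_of_int (cf_q \<alpha> s) ^ 2 * ln (real_of_int (cf_q \<alpha> s)))\<bar> \<le> B"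
    if "cf_q \<alpha> s \<ge> 2" for s
    using B[rule_format, of "nat (cf_q \<alpha> s)"] that by simp
  then show ?thesis by blast
qed

theorem corollary3:
  fixes \<alpha> :: real
  assumes "0 < \<alpha>" and "\<alpha> < 1" and "\<alpha> \<notin> \<rat>"
  shows "((\<exists>B. \<forall>n::nat. n \<ge> 2 \<longrightarrow> \<bar>e_n \<alpha> n / (real n ^ 2 * ln (real n))\<bar> \<le> B)
           \<longleftrightarrow> (\<exists>B. \<forall>s. cf_q \<alpha> s \<ge> 2 \<longrightarrow>
                 \<bar>e_n \<alpha> (nat (cf_q \<alpha> s)) / (real_of_int (cf_q \<alpha> s) ^ 2 * ln (real_of_int (cf_q \<alpha> s)))\<bar> \<le> B))
       \<and> ((\<exists>B. \<forall>s. cf_q \<alpha> s \<ge> 2 \<longrightarrow>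
                 \<bar>e_n \<alpha> (nat (cf_q \<alpha> s)) / (real_of_int (cf_q \<alpha> s) ^ 2 * ln (real_of_int (cf_q \<alpha> s)))\<bar> \<le> B)
           \<longleftrightarrow> (\<exists>B. \<forall>s. cf_q \<alpha> s \<ge> 2 \<longrightarrow>
                 \<bar>ln (real_of_int (cf_q \<alpha> (Suc s))) / (real_of_int (cf_q \<alpha> s) ^ 2 * ln (real_of_int (cf_q \<alpha> s)))\<bar> \<le> B))"
proof -
  interpret irrational_unit \<alpha> using assms by unfold_locales auto
  have cycle: "(A \<Longrightarrow> B) \<Longrightarrow> (B \<Longrightarrow> C) \<Longrightarrow> (C \<Longrightarrow> A) \<Longrightarrow> (A \<longleftrightarrow> B) \<and> (B \<longleftrightarrow> C)" for A B C
    by blast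
  show ?thesis
    by (rule cycle[OF bounded_e_n_imp_bounded_convergent_e_n bounded_convergent_e_n_imp_bounded_gap
          bounded_gap_imp_bounded_e_n])
qed

end
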